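(* Let $T$ be a left-linear term rewriting system, $\mathcal{A}$ a reduction sequence of $T$ and $\psi$ a stepwise-or-normal proof term that denotes $\mathcal{A}$. Then $mind(\psi)=mind(\mathcal{A})$; $\psi$ is convergent if and only if $\mathcal{A}$ is convergent; and in that case $tgt(\psi)=tgt(\mathcal{A})$.
   Context: Setting. $T=(\Sigma,R)$: $\Sigma$ finite; rules $\mu:l\to r$ with $l$ finite, non-variable, linear, variables of $r$ among those of $l$; terms finite or infinite; $d(t,u)=0$ if $t=u$, else $2^{-k}$, $k$ the least depth where they differ. Reduction sequences. A reduction step $a=\langle t,p,\mu,\sigma\rangle$ has $t|_p=\sigma l$, $src(a)=t$, $tgt(a)=t[\sigma r]_p$, depth $|p|$. A reduction sequence is $id_t$ (length $0$, source and target $t$) or $\langle a_\alpha\rangle_{\alpha<\beta}$, $\beta>0$, with $src(a_{\alpha+1})=tgt(a_\alpha)$ for $\alpha+1<\beta$, and for each limit $\beta_0<\beta$: $\lim_{\alpha\to\beta_0}tgt(a_\alpha)$ exists and equals $src(a_{\beta_0})$, and depths of $a_\alpha$ tend to infinity as $\alpha\to\beta_0$ (for every $n$ there is $\beta'<\beta_0$ with depth $>n$ for $\beta'<\alpha<\beta_0$). It is convergent iff it is empty, or $\beta$ is a successor, or $\beta$ is a limit and the limit-existence and depth conditions also hold at $\beta$. Its target (for convergent sequences) is $tgt(a_{\beta'})$ if $\beta=\beta'+1$ and $\lim_{\alpha\to\beta}tgt(a_\alpha)$ if $\beta$ is a limit. $mind(\mathcal{A})$ is $\omega$ for $id_t$,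 otherwise the minimum depth of its steps. Proof terms. $\Sigma^R$ extends $\Sigma$ by a symbol $\mu$ of arity $n$ per rule ($n$ distinct variables of $l$). A one-step is a closed term over $\Sigma^R$ with a single rule-symbol occurrence $\mu(t_1,..,t_n)$ at position $p$; source/target replace it by $l[t_1,..,t_n]$ / $r[t_1,..,t_n]$; $mind=|p|$; one-steps are convergent. Stepwise proof terms: one-steps; $\psi_1\cdot\psi_2$ with $tgt(\psi_1)=src(\psi_2)$ ($src=src(\psi_1)$, $tgt=tgt(\psi_2)$, convergent iff $\psi_2$ is, $mind=\min$); $\prod_{i<\omega}\psi_i=\psi_0\cdot(\psi_1\cdot\cdots)$ with all $\psi_i$ convergent and $tgt(\psi_i)=src(\psi_{i+1})$ ($src=src(\psi_0)$, $tgt=\lim_i tgt(\psi_i)$ if it exists, $mind=\min_i mind(\psi_i)$, convergent iff for each $k$, $mind(\psi_j)>k$ for all sufficiently large $j$). Stepwise-or-normal: stepwise, or a rule-free term $t\in\mathrm{Ter}^\infty(\Sigma)$ (then $src=tgt=t$, $mind=\omega$, convergent). Number of steps $|\psi|$ and components $\psi[\alpha]$ ($\alpha<|\psi|$): $|t|=0$; for a one-step $|\psi|=1$, $\psi[0]=\psi$; $|\psi_1\cdot\psi_2|=|\psi_1|+|\psi_2|$, component $\psi_1[\alpha]$ if $\alpha<|\psi_1|$ else $\psi_2[\beta]$ with $|\psi_1|+\beta=\alpha$; $|\prod\psi_i|=\sup_n(|\psi_0|+\dots+|\psi_n|)$, component $\psi_k[\gamma]$ for the unique $k,\gamma$ with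 $\alpha=|\psi_0|+\dots+|\psi_{k-1}|+\gamma$, $\gamma<|\psi_k|$. Denotation. A one-step $\psi$ denotes a step $a=\langle t,p,\mu,\sigma\rangle$ iff $src(\psi)=t$, $tgt(\psi)=tgt(a)$ and $\psi$ has symbol $\mu$ at $p$. $\psi$ denotes $\mathcal{A}$ iff $|\psi|$ equals the length of $\mathcal{A}$, $src(\psi)=src(\mathcal{A})$, and $\psi[\alpha]$ denotes the $\alpha$-th step of $\mathcal{A}$ for all $\alpha$ below the length. *)

theory Defs
  imports Complex_Main "HOL-Library.Extended_Nat"
begin

text \<open>One symbol type serves both ordinary terms (symbols Fs, Vs) and proof terms
(symbols Fs, Rs for rule symbols, and Comp for the binary composition symbol).\<close>

datatype ('f,'v,'r) sym = Fs 'f | Vs 'v | Rs 'r | Comp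

text \<open>A (finite or infinite) term is a partial map from positions (lists of
argument indices, 0-based) to symbols.\<close>
type_synonym ('f,'v,'r) tm = "nat list \<Rightarrow> ('f,'v,'r) sym option"

record ('f,'v,'r) trs =
  sig :: "'f set"
  arity :: "'f \<Rightarrow> nat"
  rules :: "'r set"
  lhs :: "'r \<Rightarrow> ('f,'v,'r) tm"
  rhs :: "'r \<Rightarrow> ('f,'v,'r) tm"
  rvars :: "'r \<Rightarrow> 'v list"   \<comment> \<open>fixed enumeration of the variables of lhs; gives the
                                   arity and argument order of the rule symbol in \<Sigma>^R\<close>

fun sym_ar :: "('f,'v,'r) trs \<Rightarrow> ('f,'v,'r) sym \<Rightarrow> nat" where
  "sym_ar T (Fs f) = arity T f"
| "sym_ar T (Vs x) = 0"
| "sym_ar T (Rs \<mu>) = length (rvars T \<mu>)"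
| "sym_ar T Comp = 2"

definition wf_tm :: "('f,'v,'r) trs \<Rightarrow> ('f,'v,'r) tm \<Rightarrow> bool" where
  "wf_tm T t \<longleftrightarrow> t [] \<noteq> None \<and>
     (\<forall>p i. t (p @ [i]) \<noteq> None \<longleftrightarrow> (\<exists>s. t p = Some s \<and> i < sym_ar T s))"

definition is_term :: "('f,'v,'r) trs \<Rightarrow> ('f,'v,'r) tm \<Rightarrow> bool" where
  "is_term T t \<longleftrightarrow> wf_tm T t \<and>
     (\<forall>p s. t p = Some s \<longrightarrow> (\<exists>f\<in>sig T. s = Fs f) \<or> (\<exists>x. s = Vs x))"

definition is_rterm :: "('f,'v,'r) trs \<Rightarrow> ('f,'v,'r) tm \<Rightarrow> bool" where
  "is_rterm T t \<longleftrightarrow> wf_tm T t \<and>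
     (\<forall>p s. t p = Some s \<longrightarrow> (\<exists>f\<in>sig T. s = Fs f) \<or> (\<exists>\<mu>\<in>rules T. s = Rs \<mu>))"

definition vars :: "('f,'v,'r) tm \<Rightarrow> 'v set" where
  "vars t = {x. \<exists>p. t p = Some (Vs x)}"

definition linear :: "('f,'v,'r) tm \<Rightarrow> bool" where
  "linear t \<longleftrightarrow> (\<forall>p q x. t p = Some (Vs x) \<and> t q = Some (Vs x) \<longrightarrow> p = q)"

definition finite_tm :: "('f,'v,'r) tm \<Rightarrow> bool" where
  "finite_tm t \<longleftrightarrow> finite {p. t p \<noteq> None}"

definition subt :: "('f,'v,'r) tm \<Rightarrow> nat list \<Rightarrow> ('f,'v,'r) tm" where
  "subt t p = (\<lambda>q. t (p @ q))"

definition repl :: "('f,'v,'r) tm \<Rightarrow> nat list \<Rightarrow> ('f,'v,'r) tm \<Rightarrow> ('f,'v,'r) tm" where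
  "repl t p s = (\<lambda>q. if take (length p) q = p then s (drop (length p) q) else t q)"

definition varat :: "('f,'v,'r) tm \<Rightarrow> nat list \<Rightarrow> 'v option" where
  "varat t q = (case t q of Some (Vs x) \<Rightarrow> Some x | _ \<Rightarrow> None)"

definition subst :: "('v \<Rightarrow> ('f,'v,'r) tm) \<Rightarrow> ('f,'v,'r) tm \<Rightarrow> ('f,'v,'r) tm" where
  "subst \<sigma> t = (\<lambda>q. case find (\<lambda>k. varat t (take k q) \<noteq> None) [0..<Suc (length q)] of
       None \<Rightarrow> t q
     | Some k \<Rightarrow> \<sigma> (the (varat t (take k q))) (drop k q))"

definition dist_tm :: "('f,'v,'r) tm \<Rightarrow> ('f,'v,'r) tm \<Rightarrow> real" where
  "dist_tm t u = (if t = u then 0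
     else (1/2) ^ (LEAST k. \<exists>q. length q = k \<and> t q \<noteq> u q))"

definition trs_ok :: "('f,'v,'r) trs \<Rightarrow> bool" where
  "trs_ok T \<longleftrightarrow> finite (sig T) \<and>
    (\<forall>\<mu>\<in>rules T. is_term T (lhs T \<mu>) \<and> finite_tm (lhs T \<mu>) \<and>
        (\<forall>x. lhs T \<mu> [] \<noteq> Some (Vs x)) \<and> linear (lhs T \<mu>) \<and>
        is_term T (rhs T \<mu>) \<and> vars (rhs T \<mu>) \<subseteq> vars (lhs T \<mu>) \<and>
        distinct (rvars T \<mu>) \<and> set (rvars T \<mu>) = vars (lhs T \<mu>))"

type_synonym ('f,'v,'r) step = "('f,'v,'r) tm \<times> nat list \<times> 'r \<times> ('v \<Rightarrow> ('f,'v,'r) tm)"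

fun st_src :: "('f,'v,'r) step \<Rightarrow> ('f,'v,'r) tm" where
  "st_src (t, p, \<mu>, \<sigma>) = t"

fun st_depth :: "('f,'v,'r) step \<Rightarrow> nat" where
  "st_depth (t, p, \<mu>, \<sigma>) = length p"

fun st_tgt :: "('f,'v,'r) trs \<Rightarrow> ('f,'v,'r) step \<Rightarrow> ('f,'v,'r) tm" where
  "st_tgt T (t, p, \<mu>, \<sigma>) = repl t p (subst \<sigma> (rhs T \<mu>))"

fun red_step :: "('f,'v,'r) trs \<Rightarrow> ('f,'v,'r) step \<Rightarrow> bool" where
  "red_step T (t, p, \<mu>, \<sigma>) \<longleftrightarrow> \<mu> \<in> rules T \<and> is_term T t \<and> t p \<noteq> None \<and>
      subt t p = subst \<sigma> (lhs T \<mu>)"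

text \<open>A reduction sequence of ordinal length \<beta> is represented as a triple
(t0, W, a): W is a well-order (its order type is \<beta>), a i is the step with index i,
and t0 is the source (needed for the empty sequence id_t0).\<close>
type_synonym ('f,'v,'r,'i) rseq = "('f,'v,'r) tm \<times> 'i rel \<times> ('i \<Rightarrow> ('f,'v,'r) step)"

definition lt :: "'i rel \<Rightarrow> 'i \<Rightarrow> 'i \<Rightarrow> bool" where
  "lt W i j \<longleftrightarrow> (i, j) \<in> W \<and> i \<noteq> j"

definition is_succ :: "'i rel \<Rightarrow> 'i \<Rightarrow> 'i \<Rightarrow> bool" where
  "is_succ W i j \<longleftrightarrow> lt W i j \<and> \<not> (\<exists>k. lt W i k \<and> lt W k j)"

definition is_limit :: "'i rel \<Rightarrow> 'i \<Rightarrow> bool" where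
  "is_limit W j \<longleftrightarrow> j \<in> Field W \<and> (\<exists>i. lt W i j) \<and> \<not> (\<exists>i. is_succ W i j)"

definition lim_below :: "'i rel \<Rightarrow> ('i \<Rightarrow> ('f,'v,'r) tm) \<Rightarrow> 'i \<Rightarrow> ('f,'v,'r) tm \<Rightarrow> bool" where
  "lim_below W f j L \<longleftrightarrow> (\<forall>\<epsilon>>0. \<exists>i'. lt W i' j \<and>
       (\<forall>i. lt W i' i \<and> lt W i j \<longrightarrow> dist_tm (f i) L < \<epsilon>))"

definition depth_below :: "'i rel \<Rightarrow> ('i \<Rightarrow> nat) \<Rightarrow> 'i \<Rightarrow> bool" where
  "depth_below W dp j \<longleftrightarrow> (\<forall>n. \<exists>i'. lt W i' j \<and> (\<forall>i. lt W i' i \<and> lt W i j \<longrightarrow> n < dp i))"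

definition lim_end :: "'i rel \<Rightarrow> ('i \<Rightarrow> ('f,'v,'r) tm) \<Rightarrow> ('f,'v,'r) tm \<Rightarrow> bool" where
  "lim_end W f L \<longleftrightarrow> (\<forall>\<epsilon>>0. \<exists>i'\<in>Field W. \<forall>i. lt W i' i \<longrightarrow> dist_tm (f i) L < \<epsilon>)"

definition depth_end :: "'i rel \<Rightarrow> ('i \<Rightarrow> nat) \<Rightarrow> bool" where
  "depth_end W dp \<longleftrightarrow> (\<forall>n. \<exists>i'\<in>Field W. \<forall>i. lt W i' i \<longrightarrow> n < dp i)"

definition has_max :: "'i rel \<Rightarrow> bool" where
  "has_max W \<longleftrightarrow> (\<exists>m\<in>Field W. \<forall>i\<in>Field W. (i, m) \<in> W)"

fun red_seq :: "('f,'v,'r) trs \<Rightarrow> ('f,'v,'r,'i) rseq \<Rightarrow> bool" where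
  "red_seq T (t0, W, a) \<longleftrightarrow>
     Well_order W \<and> is_term T t0 \<and>
     (\<forall>i\<in>Field W. red_step T (a i)) \<and>
     (\<forall>i\<in>Field W. (\<forall>j\<in>Field W. (i, j) \<in> W) \<longrightarrow> st_src (a i) = t0) \<and>
     (\<forall>i j. is_succ W i j \<longrightarrow> st_src (a j) = st_tgt T (a i)) \<and>
     (\<forall>j. is_limit W j \<longrightarrow>
        lim_below W (\<lambda>i. st_tgt T (a i)) j (st_src (a j)) \<and>
        depth_below W (\<lambda>i. st_depth (a i)) j)"

fun seq_conv :: "('f,'v,'r) trs \<Rightarrow> ('f,'v,'r,'i) rseq \<Rightarrow> bool" where
  "seq_conv T (t0, W, a) \<longleftrightarrow>
     Field W = {} \<or> has_max W \<or>
     ((\<exists>L. is_term T L \<and> lim_end W (\<lambda>i. st_tgt T (a i)) L) \<and>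
      depth_end W (\<lambda>i. st_depth (a i)))"

fun seq_tgt :: "('f,'v,'r) trs \<Rightarrow> ('f,'v,'r,'i) rseq \<Rightarrow> ('f,'v,'r) tm" where
  "seq_tgt T (t0, W, a) =
     (if Field W = {} then t0
      else if has_max W then st_tgt T (a (THE m. m \<in> Field W \<and> (\<forall>i\<in>Field W. (i, m) \<in> W)))
      else (THE L. is_term T L \<and> lim_end W (\<lambda>i. st_tgt T (a i)) L))"

fun seq_mind :: "('f,'v,'r,'i) rseq \<Rightarrow> enat" where
  "seq_mind (t0, W, a) =
     (if Field W = {} then \<infinity> else (INF i\<in>Field W. enat (st_depth (a i))))"

definition one_step :: "('f,'v,'r) trs \<Rightarrow> ('f,'v,'r) tm \<Rightarrow> bool" where
  "one_step T \<psi> \<longleftrightarrow> is_rterm T \<psi> \<and> (\<exists>!p. \<exists>\<mu>. \<psi> p = Some (Rs \<mu>))"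

definition rpos :: "('f,'v,'r) tm \<Rightarrow> nat list" where
  "rpos \<psi> = (THE p. \<exists>\<mu>. \<psi> p = Some (Rs \<mu>))"

definition rsym :: "('f,'v,'r) tm \<Rightarrow> 'r" where
  "rsym \<psi> = (THE \<mu>. \<psi> (rpos \<psi>) = Some (Rs \<mu>))"

text \<open>The substitution l[t1,..,tn]: the i-th variable of the rule (in the fixed
enumeration rvars) is replaced by the i-th argument of the rule symbol.\<close>
definition arg_subst :: "('f,'v,'r) trs \<Rightarrow> ('f,'v,'r) tm \<Rightarrow> 'v \<Rightarrow> ('f,'v,'r) tm" where
  "arg_subst T \<psi> x =
     (if x \<in> set (rvars T (rsym \<psi>))
      then subt \<psi> (rpos \<psi> @ [LEAST i. rvars T (rsym \<psi>) ! i = x])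
      else (\<lambda>q. if q = [] then Some (Vs x) else None))"

definition src1 :: "('f,'v,'r) trs \<Rightarrow> ('f,'v,'r) tm \<Rightarrow> ('f,'v,'r) tm" where
  "src1 T \<psi> = repl \<psi> (rpos \<psi>) (subst (arg_subst T \<psi>) (lhs T (rsym \<psi>)))"

definition tgt1 :: "('f,'v,'r) trs \<Rightarrow> ('f,'v,'r) tm \<Rightarrow> ('f,'v,'r) tm" where
  "tgt1 T \<psi> = repl \<psi> (rpos \<psi>) (subst (arg_subst T \<psi>) (rhs T (rsym \<psi>)))"

text \<open>Composition \<psi>1 \<cdot> \<psi>2 and the infinite product \<psi>0 \<cdot> (\<psi>1 \<cdot> (\<psi>2 \<cdot> ...)) as terms.\<close>
definition comp :: "('f,'v,'r) tm \<Rightarrow> ('f,'v,'r) tm \<Rightarrow> ('f,'v,'r) tm" where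
  "comp \<psi>1 \<psi>2 = (\<lambda>q. case q of [] \<Rightarrow> Some Comp
      | i # q' \<Rightarrow> if i = 0 then \<psi>1 q' else if i = 1 then \<psi>2 q' else None)"

definition prod :: "(nat \<Rightarrow> ('f,'v,'r) tm) \<Rightarrow> ('f,'v,'r) tm" where
  "prod \<psi>s = (\<lambda>q. let k = length (takeWhile (\<lambda>i. i = 1) q) in
      case drop k q of [] \<Rightarrow> Some Comp
      | i # q' \<Rightarrow> if i = 0 then \<psi>s k q' else None)"

definition seq_lim :: "('f,'v,'r) trs \<Rightarrow> (nat \<Rightarrow> ('f,'v,'r) tm) \<Rightarrow> ('f,'v,'r) tm option" where
  "seq_lim T s = (if \<exists>L. is_term T L \<and> (\<forall>\<epsilon>>0. \<exists>N. \<forall>i\<ge>N. dist_tm (s i) L < \<epsilon>)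
     then Some (THE L. is_term T L \<and> (\<forall>\<epsilon>>0. \<exists>N. \<forall>i\<ge>N. dist_tm (s i) L < \<epsilon>))
     else None)"

text \<open>stepwise T \<psi> s t m c S: \<psi> is a stepwise proof term with src s, tgt t
(None if the target limit does not exist), mind m, convergence flag c, and the set S of
positions of its components (one-steps), which ordered lexicographically gives the
sequence \<psi>[\<alpha>], \<alpha> < |\<psi>|.\<close>
inductive stepwise :: "('f,'v,'r) trs \<Rightarrow> ('f,'v,'r) tm \<Rightarrow> ('f,'v,'r) tm \<Rightarrow>
    ('f,'v,'r) tm option \<Rightarrow> enat \<Rightarrow> bool \<Rightarrow> nat list set \<Rightarrow> bool" for T where
  one: "one_step T \<psi> \<Longrightarrow>
     stepwise T \<psi> (src1 T \<psi>) (Some (tgt1 T \<psi>)) (enat (length (rpos \<psi>))) True {[]}"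
| cmp: "stepwise T \<psi>1 s1 (Some t1) m1 c1 S1 \<Longrightarrow> stepwise T \<psi>2 t1 t2 m2 c2 S2 \<Longrightarrow>
     stepwise T (comp \<psi>1 \<psi>2) s1 t2 (min m1 m2) c2 ((\<lambda>p. 0 # p) ` S1 \<union> (\<lambda>p. 1 # p) ` S2)"
| prd: "(\<And>i. stepwise T (\<psi>s i) (s i) (Some (s (Suc i))) (m i) True (S i)) \<Longrightarrow>
     stepwise T (prod \<psi>s) (s 0) (seq_lim T s) (INF i. m i)
       (\<forall>k::nat. \<exists>N. \<forall>j\<ge>N. enat k < m j)
       (\<Union>k. (\<lambda>p. replicate k 1 @ 0 # p) ` S k)"

definition stepwise_or_normal :: "('f,'v,'r) trs \<Rightarrow> ('f,'v,'r) tm \<Rightarrow> ('f,'v,'r) tm \<Rightarrow>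
    ('f,'v,'r) tm option \<Rightarrow> enat \<Rightarrow> bool \<Rightarrow> nat list set \<Rightarrow> bool" where
  "stepwise_or_normal T \<psi> s t m c S \<longleftrightarrow> stepwise T \<psi> s t m c S \<or>
     (is_term T \<psi> \<and> s = \<psi> \<and> t = Some \<psi> \<and> m = \<infinity> \<and> c \<and> S = {})"

fun denotes_step :: "('f,'v,'r) trs \<Rightarrow> ('f,'v,'r) tm \<Rightarrow> ('f,'v,'r) step \<Rightarrow> bool" where
  "denotes_step T \<psi> (t, p, \<mu>, \<sigma>) \<longleftrightarrow>
     src1 T \<psi> = t \<and> tgt1 T \<psi> = st_tgt T (t, p, \<mu>, \<sigma>) \<and> \<psi> p = Some (Rs \<mu>)"

definition lexrel :: "nat list set \<Rightarrow> nat list rel" where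
  "lexrel S = {(p, q). p \<in> S \<and> q \<in> S \<and> (p = q \<or> (p, q) \<in> lexord {(a, b). a < b})}"

definition order_iso :: "'a rel \<Rightarrow> 'b rel \<Rightarrow> ('a \<Rightarrow> 'b) \<Rightarrow> bool" where
  "order_iso r r' f \<longleftrightarrow> bij_betw f (Field r) (Field r') \<and>
     (\<forall>x\<in>Field r. \<forall>y\<in>Field r. (x, y) \<in> r \<longleftrightarrow> (f x, f y) \<in> r')"

text \<open>\<psi> (with source s and component positions S) denotes A = (t0, W, a):
|\<psi>| = length of A (order isomorphism of the index orders), src equal, and the
\<alpha>-th component denotes the \<alpha>-th step.\<close>
fun denotes :: "('f,'v,'r) trs \<Rightarrow> ('f,'v,'r) tm \<Rightarrow> ('f,'v,'r) tm \<Rightarrow> nat list set \<Rightarrow>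
    ('f,'v,'r,'i) rseq \<Rightarrow> bool" where
  "denotes T \<psi> s S (t0, W, a) \<longleftrightarrow> s = t0 \<and>
     (\<exists>f. order_iso (lexrel S) W f \<and> (\<forall>p\<in>S. denotes_step T (subt \<psi> p) (a (f p))))"

end

theory Submission
  imports Defs
begin

text \<open>Induction on the stepwise proof term.
If \<open>\<psi>\<^sub>1 \<cdot> \<psi>\<^sub>2\<close> denotes \<open>\<A>\<close>, the components of \<open>\<psi>\<^sub>1\<close> and of \<open>\<psi>\<^sub>2\<close> form a cut of
\<open>\<A>\<close>: the prefix is a reduction sequence denoted by \<open>\<psi>\<^sub>1\<close>, and it converges because the
step following it is either a successor or a limit step of \<open>\<A>\<close>; so the suffix is a
reduction sequence from \<open>tgt(\<psi>\<^sub>1)\<close> denoted by \<open>\<psi>\<^sub>2\<close>, and it alone decides convergence and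
target of \<open>\<A>\<close>. If \<open>\<Prod>\<psi>\<^sub>i\<close> denotes \<open>\<A>\<close>, iterating this splits \<open>\<A>\<close> into \<open>\<omega>\<close> consecutive
convergent blocks, the \<open>k\<close>-th one from \<open>src(\<psi>\<^sub>k)\<close> to \<open>src(\<psi>\<^sub>k\<^sub>+\<^sub>1)\<close>. Steps of depth
greater than \<open>n\<close> never change a term up to depth \<open>n\<close>; hence the depths of \<open>\<A>\<close> tend to
infinity iff the minimal depths of the blocks do, and then the block boundaries form a
Cauchy sequence whose limit is the limit of \<open>\<A>\<close>.\<close>

lemma Well_order_refl: "Well_order W \<Longrightarrow> i \<in> Field W \<Longrightarrow> (i, i) \<in> W"
  by (auto simp: order_on_defs refl_on_def)

lemma Well_order_total:
  "Well_order W \<Longrightarrow> i \<in> Field W \<Longrightarrow> j \<in> Field W \<Longrightarrow> (i, j) \<in> W \<or> (j, i) \<in> W"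
  by (simp add: order_on_defs total_on_def refl_on_def) metis

lemma Well_order_antisym: "Well_order W \<Longrightarrow> (i, j) \<in> W \<Longrightarrow> (j, i) \<in> W \<Longrightarrow> i = j"
  by (auto simp: order_on_defs antisym_def)

lemma Well_order_trans: "Well_order W \<Longrightarrow> (i, j) \<in> W \<Longrightarrow> (j, k) \<in> W \<Longrightarrow> (i, k) \<in> W"
  unfolding order_on_defs by (blast dest: transD)

lemma Well_order_least:
  assumes wo: "Well_order W" and "D \<subseteq> Field W" "D \<noteq> {}"
  obtains j0 where "j0 \<in> D" "\<forall>j\<in>D. (j0, j) \<in> W"
proof -
  have "wf (W - Id)" using wo by (simp add: order_on_defs)
  moreover obtain x where "x \<in> D" using assms by auto
  ultimately obtain j0 where "j0 \<in> D" "\<And>y. (y, j0) \<in> W - Id \<Longrightarrow> y \<notin> D"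
    by (rule wfE_min) blast
  then show ?thesis using that assms Well_order_total[OF wo, of j0] by blast
qed

lemma Field_Restr_Well_order: "Well_order W \<Longrightarrow> D \<subseteq> Field W \<Longrightarrow> Field (Restr W D) = D"
  by (rule Refl_Field_Restr2) (auto simp: order_on_defs)

lemma lt_Field: "lt W i j \<Longrightarrow> i \<in> Field W \<and> j \<in> Field W"
  by (auto simp: lt_def intro: FieldI1 FieldI2)

lemma lt_irrefl: "\<not> lt W i i"
  by (simp add: lt_def)

lemma lt_imp_not_le: "Well_order W \<Longrightarrow> lt W i j \<Longrightarrow> (j, i) \<notin> W"
  unfolding lt_def using Well_order_antisym by metis

lemma not_le_imp_lt: "Well_order W \<Longrightarrow> i \<in> Field W \<Longrightarrow> j \<in> Field W \<Longrightarrow> (i, j) \<notin> W \<Longrightarrow> lt W j i"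
  unfolding lt_def using Well_order_total Well_order_refl by metis

lemma le_lt_trans: "Well_order W \<Longrightarrow> (i, j) \<in> W \<Longrightarrow> lt W j k \<Longrightarrow> lt W i k"
  unfolding lt_def using Well_order_trans Well_order_antisym by metis

lemma lt_Restr: "lt (Restr W D) i j \<longleftrightarrow> i \<in> D \<and> j \<in> D \<and> lt W i j"
  by (auto simp: lt_def)

lemma not_has_max_imp_lt: "Well_order W \<Longrightarrow> \<not> has_max W \<Longrightarrow> i \<in> Field W \<Longrightarrow> \<exists>j. lt W i j"
  unfolding has_max_def using not_le_imp_lt by metis

definition eventually_below :: "'i rel \<Rightarrow> 'i \<Rightarrow> ('i \<Rightarrow> bool) \<Rightarrow> bool" where
  "eventually_below W j P \<longleftrightarrow> (\<exists>i'. lt W i' j \<and> (\<forall>i. lt W i' i \<and> lt W i j \<longrightarrow> P i))"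

definition eventually_end :: "'i rel \<Rightarrow> ('i \<Rightarrow> bool) \<Rightarrow> bool" where
  "eventually_end W P \<longleftrightarrow> (\<exists>i'\<in>Field W. \<forall>i. lt W i' i \<longrightarrow> P i)"

lemma eventually_below_limit_ex:
  assumes "is_limit W j" "eventually_below W j P"
  obtains i where "lt W i j" "P i"
  using assms unfolding is_limit_def is_succ_def eventually_below_def by blast

lemma eventually_end_conj:
  assumes wo: "Well_order W" and P: "eventually_end W P" and Q: "eventually_end W Q"
  shows "eventually_end W (\<lambda>i. P i \<and> Q i)"
proof -
  obtain i1 i2 where i1: "i1 \<in> Field W" "\<forall>i. lt W i1 i \<longrightarrow> P i"
    and i2: "i2 \<in> Field W" "\<forall>i. lt W i2 i \<longrightarrow> Q i"
    using P Q unfolding eventually_end_def by blast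
  consider "(i1, i2) \<in> W" | "(i2, i1) \<in> W" using Well_order_total[OF wo i1(1) i2(1)] by blast
  then show ?thesis
    unfolding eventually_end_def using i1 i2 le_lt_trans[OF wo] by cases blast+
qed

lemma eventually_end_ex:
  assumes "Well_order W" "\<not> has_max W" "eventually_end W P"
  obtains i where "P i"
  using assms not_has_max_imp_lt unfolding eventually_end_def by metis

section \<open>Agreement up to a depth\<close>

definition agree_upto :: "nat \<Rightarrow> ('f,'v,'r) tm \<Rightarrow> ('f,'v,'r) tm \<Rightarrow> bool" where
  "agree_upto k x y \<longleftrightarrow> (\<forall>q. length q \<le> k \<longrightarrow> x q = y q)"

lemma agree_upto_refl [simp]: "agree_upto k x x"
  by (simp add: agree_upto_def)

lemma agree_upto_sym: "agree_upto k x y \<Longrightarrow> agree_upto k y x"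
  by (simp add: agree_upto_def)

lemma agree_upto_trans: "agree_upto k x y \<Longrightarrow> agree_upto k y z \<Longrightarrow> agree_upto k x z"
  by (simp add: agree_upto_def)

lemma agree_upto_eqI: "(\<And>k. agree_upto k x y) \<Longrightarrow> x = y"
  unfolding agree_upto_def by (metis ext order_refl)

lemma st_tgt_agree_upto_st_src: "k < st_depth a \<Longrightarrow> agree_upto k (st_tgt T a) (st_src a)"
  by (cases a) (auto simp: agree_upto_def repl_def)

lemma dist_tm_less_iff_agree_upto: "dist_tm x y < (1/2) ^ k \<longleftrightarrow> agree_upto k x y"
proof (cases "x = y")
  case False
  define n where "n = (LEAST k. \<exists>q. length q = k \<and> x q \<noteq> y q)"
  obtain q0 where q0: "x q0 \<noteq> y q0" using False by auto
  have ex: "\<exists>q. length q = n \<and> x q \<noteq> y q"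
    unfolding n_def by (rule LeastI[of _ "length q0"]) (use q0 in auto)
  have least: "n \<le> length q" if "x q \<noteq> y q" for q
    unfolding n_def using that by (auto intro: Least_le)
  have "dist_tm x y = (1/2) ^ n" using False by (simp add: dist_tm_def n_def)
  moreover have "(1/2::real) ^ n < (1/2) ^ k \<longleftrightarrow> k < n" by (simp add: power_strict_decreasing_iff)
  moreover have "agree_upto k x y \<longleftrightarrow> k < n"
    using ex least unfolding agree_upto_def by (metis le_trans not_le)
  ultimately show ?thesis by simp
qed (simp add: dist_tm_def)

text \<open>Since \<open>dist_tm\<close> only takes the values \<open>0\<close> and \<open>(1/2)\<^sup>k\<close>, every \<open>\<epsilon>\<close>-condition on it is
a condition on agreement up to all depths, whatever the notion of ``eventually''.\<close>

lemma dist_tm_eventually_iff_agree_upto: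
  "(\<forall>\<epsilon>>0. \<exists>i'. Q i' \<and> (\<forall>i. R i' i \<longrightarrow> dist_tm (f i) L < \<epsilon>)) \<longleftrightarrow>
   (\<forall>k. \<exists>i'. Q i' \<and> (\<forall>i. R i' i \<longrightarrow> agree_upto k (f i) L))"
proof
  assume H: "\<forall>\<epsilon>>0. \<exists>i'. Q i' \<and> (\<forall>i. R i' i \<longrightarrow> dist_tm (f i) L < \<epsilon>)"
  show "\<forall>k. \<exists>i'. Q i' \<and> (\<forall>i. R i' i \<longrightarrow> agree_upto k (f i) L)"
  proof
    fix k :: nat
    have "(0::real) < (1/2) ^ k" by simp
    then show "\<exists>i'. Q i' \<and> (\<forall>i. R i' i \<longrightarrow> agree_upto k (f i) L)"
      using H dist_tm_less_iff_agree_upto by metis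
  qed
next
  assume H: "\<forall>k. \<exists>i'. Q i' \<and> (\<forall>i. R i' i \<longrightarrow> agree_upto k (f i) L)"
  show "\<forall>\<epsilon>>0. \<exists>i'. Q i' \<and> (\<forall>i. R i' i \<longrightarrow> dist_tm (f i) L < \<epsilon>)"
  proof (intro allI impI)
    fix \<epsilon> :: real
    assume "\<epsilon> > 0"
    then obtain k where k: "(1/2::real) ^ k < \<epsilon>" using real_arch_pow_inv[of \<epsilon> "1/2"] by auto
    obtain i' where "Q i'" "\<forall>i. R i' i \<longrightarrow> agree_upto k (f i) L" using H by blast
    then show "\<exists>i'. Q i' \<and> (\<forall>i. R i' i \<longrightarrow> dist_tm (f i) L < \<epsilon>)"
      using k dist_tm_less_iff_agree_upto by (metis order.strict_trans)
  qed
qed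

lemma lim_below_iff: "lim_below W f j L \<longleftrightarrow> (\<forall>k. eventually_below W j (\<lambda>i. agree_upto k (f i) L))"
  using dist_tm_eventually_iff_agree_upto[of "\<lambda>i'. lt W i' j" "\<lambda>i' i. lt W i' i \<and> lt W i j"]
  unfolding lim_below_def eventually_below_def by blast

lemma depth_below_iff: "depth_below W dp j \<longleftrightarrow> (\<forall>n. eventually_below W j (\<lambda>i. n < dp i))"
  unfolding depth_below_def eventually_below_def by blast

lemma lim_end_iff: "lim_end W f L \<longleftrightarrow> (\<forall>k. eventually_end W (\<lambda>i. agree_upto k (f i) L))"
  using dist_tm_eventually_iff_agree_upto[of "\<lambda>i'. i' \<in> Field W" "lt W"]
  unfolding lim_end_def eventually_end_def by blast

lemma depth_end_iff: "depth_end W dp \<longleftrightarrow> (\<forall>n. eventually_end W (\<lambda>i. n < dp i))"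
  unfolding depth_end_def eventually_end_def by blast

lemma lim_end_unique:
  assumes wo: "Well_order W" and nm: "\<not> has_max W"
    and "lim_end W f L1" "lim_end W f L2"
  shows "L1 = L2"
proof (rule agree_upto_eqI)
  fix k
  have "eventually_end W (\<lambda>i. agree_upto k (f i) L1)" "eventually_end W (\<lambda>i. agree_upto k (f i) L2)"
    using assms(3,4) unfolding lim_end_iff by blast+
  from eventually_end_conj[OF wo this]
  obtain i where "agree_upto k (f i) L1 \<and> agree_upto k (f i) L2"
    by (rule eventually_end_ex[OF wo nm])
  then show "agree_upto k L1 L2" using agree_upto_sym agree_upto_trans by blast
qed

lemma seq_lim_eqI:
  assumes "is_term T L" and lim: "\<forall>k. \<exists>N. \<forall>i\<ge>N. agree_upto k (s i) L"
  shows "seq_lim T s = Some L"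
proof -
  have conv_iff: "(\<forall>\<epsilon>>0. \<exists>N. \<forall>i\<ge>N. dist_tm (s i) L' < \<epsilon>) \<longleftrightarrow> (\<forall>k. \<exists>N. \<forall>i\<ge>N. agree_upto k (s i) L')"
    for L' using dist_tm_eventually_iff_agree_upto[of "\<lambda>_. True" "\<lambda>N i. N \<le> i" s L'] by simp
  have "L' = L" if lim': "\<forall>k. \<exists>N. \<forall>i\<ge>N. agree_upto k (s i) L'" for L'
  proof (rule agree_upto_eqI)
    fix k
    obtain N where "\<forall>i\<ge>N. agree_upto k (s i) L'" using lim' by blast
    moreover obtain N' where "\<forall>i\<ge>N'. agree_upto k (s i) L" using lim by blast
    ultimately have "agree_upto k (s (max N N')) L'" "agree_upto k (s (max N N')) L" by simp_all
    then show "agree_upto k L' L" using agree_upto_sym agree_upto_trans by blast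
  qed
  then have "(THE L'. is_term T L' \<and> (\<forall>k. \<exists>N. \<forall>i\<ge>N. agree_upto k (s i) L')) = L"
    using assms by (intro the_equality) blast+
  then show ?thesis unfolding seq_lim_def conv_iff using assms by auto
qed

lemma is_term_if_agree_upto_terms:
  assumes terms: "\<And>k. is_term T (t k)" and agree: "\<And>k. agree_upto k (t k) L"
  shows "is_term T L"
proof -
  have L_at: "L q = t k q" if "length q \<le> k" for q k
    using agree[of k] that unfolding agree_upto_def by simp
  show ?thesis
    unfolding is_term_def wf_tm_def
  proof (intro conjI allI)
    show "L [] \<noteq> None"
      using L_at[of "[]" 0] terms[of 0] unfolding is_term_def wf_tm_def by simp
    fix p i
    have "L (p @ [i]) = t (Suc (length p)) (p @ [i])" "L p = t (Suc (length p)) p"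
      using L_at by simp_all
    then show "(L (p @ [i]) \<noteq> None) = (\<exists>s. L p = Some s \<and> i < sym_ar T s)"
      using terms[of "Suc (length p)"] unfolding is_term_def wf_tm_def by presburger
  next
    fix p sy
    show "L p = Some sy \<longrightarrow> (\<exists>f\<in>sig T. sy = Fs f) \<or> (\<exists>x. sy = Vs x)"
      using L_at[of p "length p"] terms[of "length p"] unfolding is_term_def by simp
  qed
qed

lemma agree_upto_Cauchy_limit:
  assumes terms: "\<And>j. is_term T (s j)"
    and cauchy: "\<And>k. \<exists>N. \<forall>j\<ge>N. agree_upto k (s (Suc j)) (s j)"
  obtains L where "is_term T L" "\<forall>k. \<exists>N. \<forall>j\<ge>N. agree_upto k (s j) L"
proof -
  obtain N where N: "\<And>k j. N k \<le> j \<Longrightarrow> agree_upto k (s (Suc j)) (s j)"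
    using choice[of "\<lambda>k N. \<forall>j\<ge>N. agree_upto k (s (Suc j)) (s j)"] cauchy by blast
  have stable: "agree_upto k (s (j + d)) (s j)" if "N k \<le> j" for k j d
  proof (induction d)
    case (Suc d)
    have "agree_upto k (s (Suc (j + d))) (s (j + d))" using N that by simp
    then show ?case using Suc agree_upto_trans by simp
  qed simp
  define M where "M k = Max (N ` {..k})" for k
  have NM: "N n \<le> M k" if "n \<le> k" for n k
    unfolding M_def using that by simp
  define L where "L q = s (M (length q)) q" for q
  have agree_L: "agree_upto k (s j) L" if j: "M k \<le> j" for k j
    unfolding agree_upto_def
  proof (intro allI impI)
    fix q :: "nat list"
    assume q: "length q \<le> k"
    have eq: "s j' q = s (N (length q)) q" if "N (length q) \<le> j'" for j'
      using stable[OF order_refl, of "length q" "j' - N (length q)"] q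
      unfolding agree_upto_def le_add_diff_inverse[OF that] by simp
    have "N (length q) \<le> j" using NM[OF q] j by linarith
    moreover have "N (length q) \<le> M (length q)" using NM by blast
    ultimately show "s j q = L q" unfolding L_def using eq by metis
  qed
  have "is_term T L" using terms agree_L[OF order_refl] by (rule is_term_if_agree_upto_terms)
  moreover have "\<forall>k. \<exists>N. \<forall>j\<ge>N. agree_upto k (s j) L" using agree_L by blast
  ultimately show ?thesis by (rule that)
qed

lemma red_seq_src_is_term: "red_seq T (t0, W, a) \<Longrightarrow> i \<in> Field W \<Longrightarrow> is_term T (st_src (a i))"
  by (cases "a i") auto

lemma seq_tgt_max:
  assumes wo: "Well_order W" and m: "m \<in> Field W" "\<forall>i\<in>Field W. (i, m) \<in> W"
  shows "seq_tgt T (t0, W, a) = st_tgt T (a m)"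
proof -
  have "(THE m. m \<in> Field W \<and> (\<forall>i\<in>Field W. (i, m) \<in> W)) = m"
    using m Well_order_antisym[OF wo] by (intro the_equality) blast+
  moreover have "has_max W" "Field W \<noteq> {}" using m unfolding has_max_def by blast+
  ultimately show ?thesis by simp
qed

lemma seq_tgt_lim:
  assumes wo: "Well_order W" and "Field W \<noteq> {}" and nm: "\<not> has_max W"
    and L: "is_term T L" "lim_end W (\<lambda>i. st_tgt T (a i)) L"
  shows "seq_tgt T (t0, W, a) = L"
proof -
  have "(THE L. is_term T L \<and> lim_end W (\<lambda>i. st_tgt T (a i)) L) = L"
    using L lim_end_unique[OF wo nm _ L(2)] by (intro the_equality) blast+
  then show ?thesis using assms by simp
qed

lemma red_seq_deep_src_agree_upto:
  assumes r: "red_seq T (t0, W, a)" and deep: "\<forall>i\<in>Field W. k < st_depth (a i)"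
    and "i \<in> Field W"
  shows "agree_upto k (st_src (a i)) t0"
proof -
  have wo: "Well_order W" using r by simp
  have "wf (W - Id)" using wo by (simp add: order_on_defs)
  then show ?thesis using \<open>i \<in> Field W\<close>
  proof (induction i rule: wf_induct_rule)
    case (less i)
    have tgt: "agree_upto k (st_tgt T (a y)) t0" if y: "lt W y i" for y
    proof -
      have "agree_upto k (st_src (a y)) t0"
        using less.IH y lt_Field[OF y] unfolding lt_def by blast
      then show ?thesis
        using st_tgt_agree_upto_st_src deep lt_Field[OF y] agree_upto_trans by blast
    qed
    consider (first) "\<forall>j\<in>Field W. (i, j) \<in> W" | (succ) y where "is_succ W y i" | (limit) "is_limit W i"
      using less.prems not_le_imp_lt[OF wo] unfolding is_limit_def by blast
    then show ?case
    proof cases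
      case first
      then show ?thesis using r less.prems by simp
    next
      case succ
      then have "st_src (a i) = st_tgt T (a y)" using r by simp
      then show ?thesis using succ tgt unfolding is_succ_def by simp
    next
      case limit
      then have "lim_below W (\<lambda>x. st_tgt T (a x)) i (st_src (a i))" using r by simp
      then have "eventually_below W i (\<lambda>x. agree_upto k (st_tgt T (a x)) (st_src (a i)))"
        unfolding lim_below_iff by blast
      with limit obtain x where "lt W x i" "agree_upto k (st_tgt T (a x)) (st_src (a i))"
        by (rule eventually_below_limit_ex)
      then show ?thesis using tgt agree_upto_sym agree_upto_trans by metis
    qed
  qed
qed

lemma red_seq_deep_tgt_agree_upto:
  assumes r: "red_seq T (t0, W, a)" and deep: "\<forall>i\<in>Field W. k < st_depth (a i)"
    and "i \<in> Field W"
  shows "agree_upto k (st_tgt T (a i)) t0"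
proof -
  have "agree_upto k (st_tgt T (a i)) (st_src (a i))"
    using deep assms(3) by (simp add: st_tgt_agree_upto_st_src)
  then show ?thesis using red_seq_deep_src_agree_upto[OF assms] by (rule agree_upto_trans)
qed

lemma seq_tgt_deep_agree_upto:
  assumes r: "red_seq T (t0, W, a)" and deep: "\<forall>i\<in>Field W. k < st_depth (a i)"
    and cv: "seq_conv T (t0, W, a)"
  shows "agree_upto k (seq_tgt T (t0, W, a)) t0"
proof -
  have wo: "Well_order W" using r by simp
  consider "Field W = {}" | m where "m \<in> Field W" "\<forall>i\<in>Field W. (i, m) \<in> W"
    | "Field W \<noteq> {}" "\<not> has_max W"
    unfolding has_max_def by blast
  then show ?thesis
  proof cases
    case 1
    then show ?thesis by simp
  next
    case (2 m)
    then show ?thesis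
      unfolding seq_tgt_max[OF wo 2] using red_seq_deep_tgt_agree_upto[OF r deep] by simp
  next
    case 3
    then obtain L where L: "is_term T L" "lim_end W (\<lambda>i. st_tgt T (a i)) L" using cv by auto
    then obtain i' where i': "i' \<in> Field W" "\<forall>i. lt W i' i \<longrightarrow> agree_upto k (st_tgt T (a i)) L"
      unfolding lim_end_iff eventually_end_def by blast
    obtain i where "lt W i' i" using not_has_max_imp_lt[OF wo 3(2) i'(1)] ..
    then have i: "agree_upto k (st_tgt T (a i)) L" "i \<in> Field W"
      using i'(2) lt_Field[of W i' i] by blast+
    show ?thesis
      unfolding seq_tgt_lim[OF wo 3 L]
      using agree_upto_trans[OF agree_upto_sym[OF i(1)] red_seq_deep_tgt_agree_upto[OF r deep i(2)]] .
  qed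
qed

definition convex_in :: "'i rel \<Rightarrow> 'i set \<Rightarrow> bool" where
  "convex_in W D \<longleftrightarrow> D \<subseteq> Field W \<and> (\<forall>i j k. i \<in> D \<longrightarrow> k \<in> D \<longrightarrow> (i, j) \<in> W \<longrightarrow> (j, k) \<in> W \<longrightarrow> j \<in> D)"

lemma is_succ_Restr_convex: "convex_in W D \<Longrightarrow> is_succ (Restr W D) i j \<Longrightarrow> is_succ W i j"
  unfolding is_succ_def lt_Restr convex_in_def lt_def by blast

lemma is_limit_Restr_convex:
  assumes wo: "Well_order W" and c: "convex_in W D" and l: "is_limit (Restr W D) j"
  shows "is_limit W j"
proof -
  obtain i0 where i0: "i0 \<in> D" "j \<in> D" "lt W i0 j"
    using l unfolding is_limit_def lt_Restr by blast
  have "i \<in> D" if "is_succ W i j" for i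
  proof -
    have "lt W i j" using that by (simp add: is_succ_def)
    moreover have "\<not> lt W i i0" using that i0(3) unfolding is_succ_def by blast
    ultimately show ?thesis
      using c i0 not_le_imp_lt[OF wo] lt_Field unfolding convex_in_def lt_def by metis
  qed
  then have "\<not> is_succ W i j" for i
    using l i0(2) unfolding is_limit_def is_succ_def lt_Restr by blast
  moreover have "j \<in> Field W" using lt_Field[OF i0(3)] by blast
  ultimately show ?thesis using i0(3) unfolding is_limit_def by blast
qed

lemma eventually_below_Restr_convex:
  assumes wo: "Well_order W" and c: "convex_in W D" and i0: "i0 \<in> D" "j \<in> D" "lt W i0 j"
    and ev: "eventually_below W j P"
  shows "eventually_below (Restr W D) j P"
proof -
  obtain i' where i': "lt W i' j" "\<forall>i. lt W i' i \<and> lt W i j \<longrightarrow> P i"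
    using ev unfolding eventually_below_def by blast
  show ?thesis
  proof (cases "(i', i0) \<in> W")
    case True
    then show ?thesis
      using i0 i' le_lt_trans[OF wo] unfolding eventually_below_def lt_Restr by blast
  next
    case False
    then have "lt W i0 i'" using not_le_imp_lt[OF wo] lt_Field i' i0 by metis
    then have "i' \<in> D" using c i0 i' unfolding convex_in_def lt_def by blast
    then show ?thesis using i' i0 unfolding eventually_below_def lt_Restr by blast
  qed
qed

lemma red_seq_Restr_convex:
  assumes r: "red_seq T (t0, W, a)" and c: "convex_in W D" and "is_term T t'"
    and first: "\<forall>i\<in>D. (\<forall>j\<in>D. (i, j) \<in> W) \<longrightarrow> st_src (a i) = t'"
  shows "red_seq T (t', Restr W D, a)"
proof -
  have wo: "Well_order W" using r by simp
  have F: "Field (Restr W D) = D" using Field_Restr_Well_order[OF wo] c by (simp add: convex_in_def)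
  have "lim_below (Restr W D) (\<lambda>i. st_tgt T (a i)) j (st_src (a j)) \<and>
      depth_below (Restr W D) (\<lambda>i. st_depth (a i)) j" if l: "is_limit (Restr W D) j" for j
  proof -
    have "lim_below W (\<lambda>i. st_tgt T (a i)) j (st_src (a j)) \<and> depth_below W (\<lambda>i. st_depth (a i)) j"
      using r is_limit_Restr_convex[OF wo c l] by simp
    moreover obtain i0 where "i0 \<in> D" "j \<in> D" "lt W i0 j"
      using l unfolding is_limit_def lt_Restr by blast
    ultimately show ?thesis
      unfolding lim_below_iff depth_below_iff using eventually_below_Restr_convex[OF wo c] by blast
  qed
  moreover have "\<forall>i\<in>D. red_step T (a i)" using r c by (auto simp: convex_in_def)
  moreover have "well_order_on D (Restr W D)" using Well_order_Restr[OF wo, of D] F by simp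
  ultimately show ?thesis
    using r assms(3) first F is_succ_Restr_convex[OF c] by auto
qed

section \<open>Cutting a reduction sequence\<close>

definition is_cut :: "'i rel \<Rightarrow> 'i set \<Rightarrow> 'i set \<Rightarrow> bool" where
  "is_cut W D1 D2 \<longleftrightarrow> D1 \<union> D2 = Field W \<and> D1 \<inter> D2 = {} \<and> D1 \<noteq> {} \<and> D2 \<noteq> {} \<and>
     (\<forall>i\<in>D1. \<forall>j\<in>D2. (i, j) \<in> W)"

lemma is_cut_convex:
  assumes wo: "Well_order W" and cut: "is_cut W D1 D2"
  shows "convex_in W D1" "convex_in W D2"
  using cut Well_order_antisym[OF wo] FieldI2[of _ _ W] unfolding is_cut_def convex_in_def
  by blast+

lemma is_cut_Field_Restr:
  assumes wo: "Well_order W" and cut: "is_cut W D1 D2"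
  shows "Field (Restr W D1) = D1" "Field (Restr W D2) = D2"
proof -
  have "D1 \<subseteq> Field W" "D2 \<subseteq> Field W" using cut unfolding is_cut_def by blast+
  then show "Field (Restr W D1) = D1" "Field (Restr W D2) = D2"
    by (simp_all add: Field_Restr_Well_order[OF wo])
qed

lemma is_cut_lt: "is_cut W D1 D2 \<Longrightarrow> i \<in> D1 \<Longrightarrow> j \<in> D2 \<Longrightarrow> lt W i j"
  unfolding is_cut_def lt_def by blast

lemma is_cut_lt_least_iff:
  assumes wo: "Well_order W" and cut: "is_cut W D1 D2"
    and j0: "j0 \<in> D2" "\<forall>j\<in>D2. (j0, j) \<in> W"
  shows "lt W i j0 \<longleftrightarrow> i \<in> D1"
proof
  assume i: "lt W i j0"
  then have "i \<in> Field W" "i \<notin> D2" using lt_Field[OF i] j0(2) lt_imp_not_le[OF wo i] by blast+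
  then show "i \<in> D1" using cut unfolding is_cut_def by blast
qed (rule is_cut_lt[OF cut _ j0(1)])

lemma is_cut_max_in_suffix:
  assumes wo: "Well_order W" and cut: "is_cut W D1 D2"
    and m: "m \<in> Field W" "\<forall>i\<in>Field W. (i, m) \<in> W"
  shows "m \<in> D2"
proof (rule ccontr)
  assume "m \<notin> D2"
  obtain j where j: "j \<in> D2" using cut unfolding is_cut_def by blast
  then have "(m, j) \<in> W" "j \<in> Field W" using cut m \<open>m \<notin> D2\<close> unfolding is_cut_def by blast+
  then have "m = j" using m Well_order_antisym[OF wo] by blast
  then show False using \<open>m \<notin> D2\<close> j by simp
qed

lemma eventually_end_cut:
  assumes wo: "Well_order W" and cut: "is_cut W D1 D2"
  shows "eventually_end W P \<longleftrightarrow> eventually_end (Restr W D2) P"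
proof
  note F2 = is_cut_Field_Restr(2)[OF wo cut]
  assume "eventually_end W P"
  then obtain i' where i': "i' \<in> Field W" "\<forall>i. lt W i' i \<longrightarrow> P i"
    unfolding eventually_end_def by blast
  obtain j where j: "j \<in> D2" using cut unfolding is_cut_def by blast
  define i'' where "i'' = (if i' \<in> D2 then i' else j)"
  have "(i', i'') \<in> W" "i'' \<in> D2"
    using i' j cut Well_order_refl[OF wo] unfolding i''_def is_cut_def by auto
  then show "eventually_end (Restr W D2) P"
    using i'(2) le_lt_trans[OF wo] F2 unfolding eventually_end_def lt_Restr by blast
next
  note F2 = is_cut_Field_Restr(2)[OF wo cut]
  assume "eventually_end (Restr W D2) P"
  then obtain i' where i': "i' \<in> D2" "\<forall>i. lt (Restr W D2) i' i \<longrightarrow> P i"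
    using F2 unfolding eventually_end_def by blast
  have "i \<in> D2" if "lt W i' i" for i
    using that i'(1) cut lt_Field[OF that] lt_imp_not_le[OF wo that] unfolding is_cut_def by blast
  then have "\<forall>i. lt W i' i \<longrightarrow> P i" using i' unfolding lt_Restr by blast
  then show "eventually_end W P" using i'(1) cut unfolding eventually_end_def is_cut_def by blast
qed

lemma has_max_cut:
  assumes wo: "Well_order W" and cut: "is_cut W D1 D2"
  shows "has_max W \<longleftrightarrow> has_max (Restr W D2)"
proof
  note F2 = is_cut_Field_Restr(2)[OF wo cut]
  assume "has_max W"
  then obtain m where m: "m \<in> Field W" "\<forall>i\<in>Field W. (i, m) \<in> W" unfolding has_max_def by blast
  moreover have "m \<in> D2" using is_cut_max_in_suffix[OF wo cut m] .
  ultimately show "has_max (Restr W D2)"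
    using F2 cut unfolding has_max_def is_cut_def by (intro bexI[of _ m]) auto
next
  note F2 = is_cut_Field_Restr(2)[OF wo cut]
  assume "has_max (Restr W D2)"
  then obtain m where "m \<in> D2" "\<forall>i\<in>D2. (i, m) \<in> W" using F2 unfolding has_max_def by auto
  then show "has_max W" using cut unfolding has_max_def is_cut_def by blast
qed

lemma seq_mind_cut:
  assumes wo: "Well_order W" and cut: "is_cut W D1 D2"
  shows "seq_mind (t0, W, a) = min (seq_mind (t0, Restr W D1, a)) (seq_mind (t1, Restr W D2, a))"
proof -
  have "Field W = D1 \<union> D2" "D1 \<noteq> {}" "D2 \<noteq> {}" using cut unfolding is_cut_def by blast+
  then show ?thesis using is_cut_Field_Restr[OF wo cut] by (simp add: INF_union inf_min)
qed

lemma seq_conv_seq_tgt_cut: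
  assumes wo: "Well_order W" and cut: "is_cut W D1 D2"
  shows "seq_conv T (t0, W, a) \<longleftrightarrow> seq_conv T (t1, Restr W D2, a)"
    and "seq_tgt T (t0, W, a) = seq_tgt T (t1, Restr W D2, a)"
proof -
  note F2 = is_cut_Field_Restr(2)[OF wo cut]
  have ne: "Field W \<noteq> {}" "D2 \<noteq> {}" using cut unfolding is_cut_def by blast+
  have lim: "lim_end W f L \<longleftrightarrow> lim_end (Restr W D2) f L" for f and L :: "('f,'v,'r) tm"
    unfolding lim_end_iff eventually_end_cut[OF wo cut] ..
  have dep: "depth_end W dp \<longleftrightarrow> depth_end (Restr W D2) dp" for dp
    unfolding depth_end_iff eventually_end_cut[OF wo cut] ..
  show "seq_conv T (t0, W, a) \<longleftrightarrow> seq_conv T (t1, Restr W D2, a)"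
    unfolding seq_conv.simps lim dep using ne F2 has_max_cut[OF wo cut] by simp
  show "seq_tgt T (t0, W, a) = seq_tgt T (t1, Restr W D2, a)"
  proof (cases "has_max W")
    case True
    then obtain m where m: "m \<in> Field W" "\<forall>i\<in>Field W. (i, m) \<in> W" unfolding has_max_def by blast
    moreover have "m \<in> D2" using is_cut_max_in_suffix[OF wo cut m] .
    ultimately have m2: "m \<in> Field (Restr W D2)" "\<forall>i\<in>Field (Restr W D2). (i, m) \<in> Restr W D2"
      using F2 cut unfolding is_cut_def by blast+
    show ?thesis unfolding seq_tgt_max[OF wo m] seq_tgt_max[OF Well_order_Restr[OF wo] m2] ..
  next
    case False
    moreover have "(\<lambda>L. is_term T L \<and> lim_end W (\<lambda>i. st_tgt T (a i)) L) =
        (\<lambda>L. is_term T L \<and> lim_end (Restr W D2) (\<lambda>i. st_tgt T (a i)) L)"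
      using lim by blast
    ultimately show ?thesis using ne F2 has_max_cut[OF wo cut] by simp
  qed
qed

text \<open>The first step after a cut is either the successor of the last step of the prefix or
a limit step; either way the prefix converges to its source.\<close>

lemma red_seq_cut_prefix_tgt:
  assumes r: "red_seq T (t0, W, a)" and cut: "is_cut W D1 D2"
    and j0: "j0 \<in> D2" "\<forall>j\<in>D2. (j0, j) \<in> W"
  shows "seq_conv T (t0, Restr W D1, a) \<and> seq_tgt T (t0, Restr W D1, a) = st_src (a j0)"
proof -
  have wo: "Well_order W" using r by simp
  note F1 = is_cut_Field_Restr(1)[OF wo cut]
  note below_j0 = is_cut_lt_least_iff[OF wo cut j0]
  show ?thesis
  proof (cases "has_max (Restr W D1)")
    case True
    then obtain m1 where m1: "m1 \<in> D1" "\<forall>i\<in>D1. (i, m1) \<in> W" unfolding has_max_def F1 by blast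
    have "is_succ W m1 j0"
      using m1 below_j0 lt_imp_not_le[OF wo] unfolding is_succ_def by blast
    then have "st_src (a j0) = st_tgt T (a m1)" using r by simp
    moreover have "seq_tgt T (t0, Restr W D1, a) = st_tgt T (a m1)"
      using m1 F1 by (intro seq_tgt_max[OF Well_order_Restr[OF wo]]) auto
    ultimately show ?thesis using True by simp
  next
    case False
    have "\<not> is_succ W i j0" for i
      using False not_has_max_imp_lt[OF Well_order_Restr[OF wo]] below_j0 F1
      unfolding is_succ_def lt_Restr by blast
    then have "is_limit W j0"
      using j0 cut below_j0 unfolding is_limit_def is_cut_def by blast
    then have lim: "lim_below W (\<lambda>i. st_tgt T (a i)) j0 (st_src (a j0))"
      and dep: "depth_below W (\<lambda>i. st_depth (a i)) j0" using r by simp_all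
    have prefix: "eventually_end (Restr W D1) P" if "eventually_below W j0 P" for P
      using that below_j0 F1 unfolding eventually_below_def eventually_end_def lt_Restr by blast
    have L: "lim_end (Restr W D1) (\<lambda>i. st_tgt T (a i)) (st_src (a j0))"
      using lim prefix unfolding lim_below_iff lim_end_iff by blast
    moreover have "depth_end (Restr W D1) (\<lambda>i. st_depth (a i))"
      using dep prefix unfolding depth_below_iff depth_end_iff by blast
    moreover have src: "is_term T (st_src (a j0))"
      using red_seq_src_is_term[OF r] j0 cut unfolding is_cut_def by blast
    moreover have ne: "Field (Restr W D1) \<noteq> {}" using cut F1 by (simp add: is_cut_def)
    ultimately show ?thesis
      using seq_tgt_lim[OF Well_order_Restr[OF wo] ne False src L] by auto
  qed
qed

lemma red_seq_cut:
  assumes r: "red_seq T (t0, W, a)" and cut: "is_cut W D1 D2"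
  shows "red_seq T (t0, Restr W D1, a)" and "seq_conv T (t0, Restr W D1, a)"
    and "red_seq T (seq_tgt T (t0, Restr W D1, a), Restr W D2, a)"
proof -
  have wo: "Well_order W" using r by simp
  have "D2 \<subseteq> Field W" "D2 \<noteq> {}" using cut unfolding is_cut_def by blast+
  then obtain j0 where j0: "j0 \<in> D2" "\<forall>j\<in>D2. (j0, j) \<in> W" by (rule Well_order_least[OF wo])
  note prefix = red_seq_cut_prefix_tgt[OF r cut j0]
  have "st_src (a i) = t0" if "i \<in> D1" "\<forall>j\<in>D1. (i, j) \<in> W" for i
  proof -
    have "\<forall>j\<in>Field W. (i, j) \<in> W" using that cut unfolding is_cut_def by blast
    moreover have "i \<in> Field W" using that(1) cut unfolding is_cut_def by blast
    ultimately show ?thesis using r by simp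
  qed
  then have "\<forall>i\<in>D1. (\<forall>j\<in>D1. (i, j) \<in> W) \<longrightarrow> st_src (a i) = t0" by blast
  moreover have "is_term T t0" using r by simp
  ultimately show "red_seq T (t0, Restr W D1, a)"
    by (intro red_seq_Restr_convex[OF r is_cut_convex(1)[OF wo cut]])
  show "seq_conv T (t0, Restr W D1, a)" using prefix ..
  have "is_term T (st_src (a j0))"
    using red_seq_src_is_term[OF r] j0 cut unfolding is_cut_def by blast
  moreover have "\<forall>i\<in>D2. (\<forall>j\<in>D2. (i, j) \<in> W) \<longrightarrow> st_src (a i) = st_src (a j0)"
    using j0 Well_order_antisym[OF wo] by blast
  ultimately show "red_seq T (seq_tgt T (t0, Restr W D1, a), Restr W D2, a)"
    unfolding conjunct2[OF prefix] by (intro red_seq_Restr_convex[OF r is_cut_convex(2)[OF wo cut]])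
qed

section \<open>Concatenations of \<open>\<omega>\<close> blocks\<close>

definition omega_blocks :: "'i rel \<Rightarrow> (nat \<Rightarrow> 'i set) \<Rightarrow> bool" where
  "omega_blocks W D \<longleftrightarrow> Field W = (\<Union>k. D k) \<and> (\<forall>k. D k \<noteq> {}) \<and>
     (\<forall>k l i j. k < l \<longrightarrow> i \<in> D k \<longrightarrow> j \<in> D l \<longrightarrow> lt W i j)"

lemma omega_blocks_Field_Restr:
  assumes "Well_order W" and "omega_blocks W D"
  shows "Field (Restr W (D k)) = D k"
proof -
  have "D k \<subseteq> Field W" using assms(2) unfolding omega_blocks_def by blast
  then show ?thesis by (rule Field_Restr_Well_order[OF assms(1)])
qed

lemma omega_blocks_index_le:
  assumes wo: "Well_order W" and D: "omega_blocks W D"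
    and ij: "i \<in> D k" "j \<in> D l" "lt W i j"
  shows "k \<le> l"
proof (rule ccontr)
  assume "\<not> k \<le> l"
  then have "lt W j i" using D ij(1,2) unfolding omega_blocks_def by (meson not_le)
  then show False using lt_imp_not_le[OF wo ij(3)] unfolding lt_def by blast
qed

lemma omega_blocks_not_has_max:
  assumes wo: "Well_order W" and D: "omega_blocks W D"
  shows "\<not> has_max W"
proof
  assume "has_max W"
  then obtain m where m: "m \<in> Field W" "\<forall>i\<in>Field W. (i, m) \<in> W" unfolding has_max_def by blast
  then obtain k where "m \<in> D k" using D unfolding omega_blocks_def by blast
  moreover obtain i where i: "i \<in> D (Suc k)" using D unfolding omega_blocks_def by blast
  ultimately have "lt W m i" using D unfolding omega_blocks_def by blast
  moreover have "i \<in> Field W" using i D unfolding omega_blocks_def by blast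
  ultimately show False using m(2) lt_imp_not_le[OF wo] by blast
qed

lemma omega_blocks_cut:
  assumes wo: "Well_order W" and D: "omega_blocks W D"
  shows "is_cut (Restr W (\<Union>j\<in>{k..}. D j)) (D k) (\<Union>j\<in>{Suc k..}. D j)"
proof -
  have split: "(\<Union>j\<in>{k..}. D j) = D k \<union> (\<Union>j\<in>{Suc k..}. D j)"
    by (auto simp: atLeast_Suc)
  have "(\<Union>j\<in>{k..}. D j) \<subseteq> Field W" using D by (auto simp: omega_blocks_def)
  then have "Field (Restr W (\<Union>j\<in>{k..}. D j)) = D k \<union> (\<Union>j\<in>{Suc k..}. D j)"
    using Field_Restr_Well_order[OF wo] split by auto
  then show ?thesis
    using D split lt_irrefl unfolding is_cut_def omega_blocks_def lt_def
    by (auto simp: Suc_le_eq) blast+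
qed

text \<open>Only the targets of the blocks must be known in advance: the cut lemma provides
their convergence and the reduction sequence following them.\<close>

lemma red_seq_omega_blocks:
  assumes r: "red_seq T (s 0, W, a)" and D: "omega_blocks W D"
    and tgt: "\<And>k. red_seq T (s k, Restr W (D k), a) \<Longrightarrow> seq_tgt T (s k, Restr W (D k), a) = s (Suc k)"
  shows "red_seq T (s k, Restr W (D k), a) \<and> seq_conv T (s k, Restr W (D k), a) \<and>
    seq_tgt T (s k, Restr W (D k), a) = s (Suc k)"
proof -
  have wo: "Well_order W" using r by simp
  define E where "E k = (\<Union>j\<in>{k..}. D j)" for k
  have restr: "Restr (Restr W (E k)) (D k) = Restr W (D k)"
    "Restr (Restr W (E k)) (E (Suc k)) = Restr W (E (Suc k))" for k
    by (rule Restr_subset, force simp: E_def)+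
  have cut: "red_seq T (s k, Restr W (D k), a)" "seq_conv T (s k, Restr W (D k), a)"
      "red_seq T (seq_tgt T (s k, Restr W (D k), a), Restr W (E (Suc k)), a)"
    if "red_seq T (s k, Restr W (E k), a)" for k
    using red_seq_cut[OF that omega_blocks_cut[OF wo D, of k, folded E_def]] unfolding restr by blast+
  have tail: "red_seq T (s k, Restr W (E k), a)" for k
  proof (induction k)
    case 0
    have "E 0 = Field W" using D by (auto simp: E_def omega_blocks_def)
    then show ?case using r by (simp add: Restr_Field)
  next
    case (Suc k)
    then show ?case using cut(3)[OF Suc] tgt[OF cut(1)[OF Suc]] by simp
  qed
  show ?thesis using cut[OF tail] tgt by simp
qed

lemma enat_less_seq_mind_iff: "enat n < seq_mind (t0, W, a) \<longleftrightarrow> (\<forall>i\<in>Field W. n < st_depth (a i))"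
proof -
  have "enat n < (INF i\<in>Field W. enat (st_depth (a i))) \<longleftrightarrow> enat (Suc n) \<le> (INF i\<in>Field W. enat (st_depth (a i)))"
    by (simp add: Suc_ile_eq)
  also have "\<dots> \<longleftrightarrow> (\<forall>i\<in>Field W. n < st_depth (a i))"
    by (simp add: le_INF_iff Suc_le_eq)
  finally show ?thesis by simp
qed

lemma seq_mind_omega_blocks:
  assumes wo: "Well_order W" and D: "omega_blocks W D"
  shows "seq_mind (t0, W, a) = (INF k. seq_mind (s k, Restr W (D k), a))"
proof -
  have F: "Field (Restr W (D k)) = D k" "D k \<noteq> {}" for k
    using omega_blocks_Field_Restr[OF wo D] D unfolding omega_blocks_def by blast+
  have "(INF i\<in>(\<Union>k. D k). enat (st_depth (a i))) = (INF k. INF i\<in>D k. enat (st_depth (a i)))"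
    by (rule order_antisym) (blast intro: INF_greatest INF_lower2)+
  then show ?thesis using D F by (auto simp: omega_blocks_def)
qed

lemma depth_end_omega_blocks_iff:
  assumes wo: "Well_order W" and D: "omega_blocks W D"
  shows "depth_end W (\<lambda>i. st_depth (a i)) \<longleftrightarrow>
    (\<forall>n. \<exists>N. \<forall>j\<ge>N. enat n < seq_mind (s j, Restr W (D j), a))"
proof -
  note F = omega_blocks_Field_Restr[OF wo D]
  have "(\<exists>i'\<in>Field W. \<forall>i. lt W i' i \<longrightarrow> n < st_depth (a i)) \<longleftrightarrow>
      (\<exists>N. \<forall>j\<ge>N. \<forall>i\<in>D j. n < st_depth (a i))" for n
  proof
    assume "\<exists>i'\<in>Field W. \<forall>i. lt W i' i \<longrightarrow> n < st_depth (a i)"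
    then obtain i' k where "i' \<in> D k" "\<forall>i. lt W i' i \<longrightarrow> n < st_depth (a i)"
      using D by (auto simp: omega_blocks_def)
    then have "\<forall>j\<ge>Suc k. \<forall>i\<in>D j. n < st_depth (a i)"
      using D unfolding omega_blocks_def by (auto simp: Suc_le_eq)
    then show "\<exists>N. \<forall>j\<ge>N. \<forall>i\<in>D j. n < st_depth (a i)" by blast
  next
    assume "\<exists>N. \<forall>j\<ge>N. \<forall>i\<in>D j. n < st_depth (a i)"
    then obtain N where N: "\<forall>j\<ge>N. \<forall>i\<in>D j. n < st_depth (a i)" by blast
    obtain i' where "i' \<in> D N" using D unfolding omega_blocks_def by blast
    moreover have "n < st_depth (a i)" if i': "i' \<in> D N" and lt: "lt W i' i" for i
    proof -
      obtain j where j: "i \<in> D j" using lt_Field[OF lt] D unfolding omega_blocks_def by blast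
      then have "N \<le> j" using omega_blocks_index_le[OF wo D i' _ lt] by blast
      then show ?thesis using N j by blast
    qed
    ultimately show "\<exists>i'\<in>Field W. \<forall>i. lt W i' i \<longrightarrow> n < st_depth (a i)"
      using D unfolding omega_blocks_def by blast
  qed
  then show ?thesis unfolding depth_end_def enat_less_seq_mind_iff F by blast
qed

lemma lim_end_omega_blocksI:
  assumes wo: "Well_order W" and D: "omega_blocks W D"
    and near: "\<And>k j i. N k \<le> j \<Longrightarrow> i \<in> D j \<Longrightarrow> agree_upto k (f i) (s j)"
    and lim: "\<forall>k. \<exists>M. \<forall>j\<ge>M. agree_upto k (s j) L"
  shows "lim_end W f L"
  unfolding lim_end_iff
proof
  fix k
  obtain M where M: "\<forall>j\<ge>M. agree_upto k (s j) L" using lim by blast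
  obtain i' where i': "i' \<in> D (max (N k) M)" using D unfolding omega_blocks_def by blast
  have "agree_upto k (f i) L" if lt: "lt W i' i" for i
  proof -
    obtain j where j: "i \<in> D j" using lt_Field[OF lt] D unfolding omega_blocks_def by blast
    then have "max (N k) M \<le> j" using omega_blocks_index_le[OF wo D i' _ lt] by blast
    then have "agree_upto k (f i) (s j)" "agree_upto k (s j) L" using near[OF _ j] M by simp_all
    then show ?thesis by (rule agree_upto_trans)
  qed
  moreover have "i' \<in> Field W" using i' D unfolding omega_blocks_def by blast
  ultimately show "eventually_end W (\<lambda>i. agree_upto k (f i) L)" unfolding eventually_end_def by blast
qed

lemma lim_end_omega_blocks:
  assumes r: "red_seq T (s 0, W, a)" and D: "omega_blocks W D"
    and blocks: "\<And>k. red_seq T (s k, Restr W (D k), a) \<and> seq_conv T (s k, Restr W (D k), a) \<and>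
      seq_tgt T (s k, Restr W (D k), a) = s (Suc k)"
    and deep: "\<forall>n. \<exists>N. \<forall>j\<ge>N. enat n < seq_mind (s j, Restr W (D j), a)"
  obtains L where "is_term T L" "lim_end W (\<lambda>i. st_tgt T (a i)) L"
    "\<forall>k. \<exists>N. \<forall>j\<ge>N. agree_upto k (s j) L"
proof -
  have wo: "Well_order W" using r by simp
  note F = omega_blocks_Field_Restr[OF wo D]
  obtain N where N: "\<And>n j. N n \<le> j \<Longrightarrow> \<forall>i\<in>Field (Restr W (D j)). n < st_depth (a i)"
    using choice[OF deep] unfolding enat_less_seq_mind_iff by blast
  have step_agree: "agree_upto n (st_tgt T (a i)) (s j)" if "N n \<le> j" "i \<in> D j" for n j i
    using red_seq_deep_tgt_agree_upto[OF conjunct1[OF blocks] N[OF that(1)]] that(2) F by blast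
  have "is_term T (s j)" for j using blocks[of j] by simp
  moreover have "\<exists>N'. \<forall>j\<ge>N'. agree_upto n (s (Suc j)) (s j)" for n
  proof (intro exI allI impI)
    fix j
    assume "N n \<le> j"
    then show "agree_upto n (s (Suc j)) (s j)"
      using seq_tgt_deep_agree_upto[OF conjunct1[OF blocks] N] blocks by simp
  qed
  ultimately obtain L where L: "is_term T L" "\<forall>k. \<exists>M. \<forall>j\<ge>M. agree_upto k (s j) L"
    by (rule agree_upto_Cauchy_limit)
  moreover have "lim_end W (\<lambda>i. st_tgt T (a i)) L"
    using lim_end_omega_blocksI[OF wo D step_agree L(2)] .
  ultimately show ?thesis using that by blast
qed
lemma seq_conv_omega_blocks:
  assumes r: "red_seq T (s 0, W, a)" and D: "omega_blocks W D"
    and blocks: "\<And>k. red_seq T (s k, Restr W (D k), a) \<and> seq_conv T (s k, Restr W (D k), a) \<and>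
      seq_tgt T (s k, Restr W (D k), a) = s (Suc k)"
  shows "seq_conv T (s 0, W, a) \<longleftrightarrow> (\<forall>n. \<exists>N. \<forall>j\<ge>N. enat n < seq_mind (s j, Restr W (D j), a))"
    and "seq_conv T (s 0, W, a) \<Longrightarrow> seq_lim T s = Some (seq_tgt T (s 0, W, a))"
proof -
  have wo: "Well_order W" using r by simp
  have ne: "Field W \<noteq> {}" using D unfolding omega_blocks_def by blast
  have nm: "\<not> has_max W" using omega_blocks_not_has_max[OF wo D] .
  have conv: "seq_conv T (s 0, W, a) \<longleftrightarrow>
      (\<exists>L. is_term T L \<and> lim_end W (\<lambda>i. st_tgt T (a i)) L) \<and> depth_end W (\<lambda>i. st_depth (a i))"
    using ne nm by simp
  note deep_iff = depth_end_omega_blocks_iff[OF wo D, of a s]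
  show conv_iff: "seq_conv T (s 0, W, a) \<longleftrightarrow> (\<forall>n. \<exists>N. \<forall>j\<ge>N. enat n < seq_mind (s j, Restr W (D j), a))"
  proof
    assume deep: "\<forall>n. \<exists>N. \<forall>j\<ge>N. enat n < seq_mind (s j, Restr W (D j), a)"
    obtain L where "is_term T L" "lim_end W (\<lambda>i. st_tgt T (a i)) L"
      by (rule lim_end_omega_blocks[OF r D blocks deep])
    then show "seq_conv T (s 0, W, a)" using conv deep deep_iff by blast
  qed (use conv deep_iff in blast)
  assume "seq_conv T (s 0, W, a)"
  then have "\<forall>n. \<exists>N. \<forall>j\<ge>N. enat n < seq_mind (s j, Restr W (D j), a)" using conv_iff by blast
  then obtain L where L: "is_term T L" "lim_end W (\<lambda>i. st_tgt T (a i)) L"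
    "\<forall>k. \<exists>N. \<forall>j\<ge>N. agree_upto k (s j) L"
    by (rule lim_end_omega_blocks[OF r D blocks])
  show "seq_lim T s = Some (seq_tgt T (s 0, W, a))"
    unfolding seq_tgt_lim[OF wo ne nm L(1,2)] by (rule seq_lim_eqI[OF L(1,3)])
qed

definition summarizes ::
    "('f,'v,'r) trs \<Rightarrow> enat \<Rightarrow> bool \<Rightarrow> ('f,'v,'r) tm option \<Rightarrow> ('f,'v,'r,'i) rseq \<Rightarrow> bool" where
  "summarizes T m c t A \<longleftrightarrow> m = seq_mind A \<and> (c \<longleftrightarrow> seq_conv T A) \<and> (c \<longrightarrow> t = Some (seq_tgt T A))"

lemma Field_lexrel [simp]: "Field (lexrel S) = S"
  unfolding lexrel_def Field_def by auto

lemma order_iso_lexrel_Field: "order_iso (lexrel S) W f \<Longrightarrow> Field W = f ` S"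
  unfolding order_iso_def by (simp add: bij_betw_def)

lemma order_iso_lexrel_inj_on: "order_iso (lexrel S) W f \<Longrightarrow> inj_on f S"
  unfolding order_iso_def bij_betw_def Field_lexrel by blast

lemma order_iso_lexrel_lt:
  assumes iso: "order_iso (lexrel S) W f" and "x \<in> S" "y \<in> S"
    and xy: "(x, y) \<in> lexord {(a, b). a < (b::nat)}"
  shows "lt W (f x) (f y)"
proof -
  have "(x, y) \<in> lexrel S" using assms(2,3) xy unfolding lexrel_def by blast
  then have "(f x, f y) \<in> W" using iso assms(2,3) unfolding order_iso_def by simp
  moreover have "x \<noteq> y" using xy lexord_irreflexive[of "{(a, b). a < (b::nat)}" x] by auto
  then have "f x \<noteq> f y"
    using order_iso_lexrel_inj_on[OF iso] assms(2,3) by (metis inj_on_contraD)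
  ultimately show ?thesis unfolding lt_def by blast
qed

lemma denotes_Restr_subterm:
  assumes iso: "order_iso (lexrel S) W f" and ds: "\<forall>p\<in>S. denotes_step T (subt \<psi> p) (a (f p))"
    and wo: "Well_order W" and sub: "(\<lambda>p. u @ p) ` S' \<subseteq> S" and \<psi>': "subt \<psi> u = \<psi>'"
  shows "denotes T \<psi>' t S' (t, Restr W (f ` (\<lambda>p. u @ p) ` S'), a)"
proof -
  let ?g = "\<lambda>p. u @ p"
  have bij: "bij_betw f S (Field W)"
    and ord: "\<forall>x\<in>S. \<forall>y\<in>S. (x, y) \<in> lexrel S \<longleftrightarrow> (f x, f y) \<in> W"
    using iso unfolding order_iso_def Field_lexrel by blast+
  then have inj: "inj_on f S" and F: "f ` S = Field W" unfolding bij_betw_def by blast+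
  have FD: "Field (Restr W (f ` ?g ` S')) = f ` ?g ` S'"
    using sub F by (intro Field_Restr_Well_order[OF wo]) blast
  have "bij_betw (f \<circ> ?g) S' (f ` ?g ` S')"
    using inj_on_subset[OF inj sub] unfolding bij_betw_def inj_on_def by auto
  moreover have "(x, y) \<in> lexrel S' \<longleftrightarrow> ((f \<circ> ?g) x, (f \<circ> ?g) y) \<in> Restr W (f ` ?g ` S')"
    if xy: "x \<in> S'" "y \<in> S'" for x y
  proof -
    have uxy: "u @ x \<in> S" "u @ y \<in> S" using sub xy by auto
    then have "((f \<circ> ?g) x, (f \<circ> ?g) y) \<in> Restr W (f ` ?g ` S') \<longleftrightarrow> (u @ x, u @ y) \<in> lexrel S"
      using ord xy by auto
    also have "\<dots> \<longleftrightarrow> (x, y) \<in> lexrel S'"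
      using xy uxy unfolding lexrel_def by (simp add: lexord_same_pref_iff)
    finally show ?thesis by simp
  qed
  moreover have "denotes_step T (subt \<psi>' p) (a ((f \<circ> ?g) p))" if "p \<in> S'" for p
  proof -
    have "u @ p \<in> S" using that sub by blast
    then have "denotes_step T (subt \<psi> (u @ p)) (a (f (u @ p)))" using ds by blast
    then show ?thesis unfolding \<psi>'[symmetric] by (simp add: subt_def)
  qed
  ultimately show ?thesis unfolding denotes.simps order_iso_def Field_lexrel FD by blast
qed

lemma stepwise_components_nonempty: "stepwise T \<psi> s t m c S \<Longrightarrow> S \<noteq> {}"
  by (induction rule: stepwise.induct) auto

lemma subt_comp: "subt (comp \<psi>1 \<psi>2) [0] = \<psi>1" "subt (comp \<psi>1 \<psi>2) [1] = \<psi>2"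
  by (simp_all add: subt_def comp_def fun_eq_iff)

lemma subt_prod: "subt (prod \<psi>s) (replicate k 1 @ [0]) = \<psi>s k"
proof -
  have "takeWhile (\<lambda>i. i = 1) (replicate k 1 @ 0 # q) = replicate k (1::nat)" for q
    by (induction k) auto
  then show ?thesis by (simp add: subt_def prod_def fun_eq_iff Let_def)
qed

lemma lexord_replicate_blocks:
  assumes "k < j"
  shows "((replicate k 1 @ [0]) @ p, (replicate j 1 @ [0]) @ q) \<in> lexord {(a, b). a < (b::nat)}"
proof -
  obtain d where "j = Suc (k + d)" using assms less_imp_Suc_add by blast
  then have "replicate j (1::nat) = replicate k 1 @ replicate (Suc d) 1"
    by (metis add_Suc_right replicate_add)
  then have j: "(replicate j 1 @ [0]) @ q = replicate k 1 @ (1 # (replicate d 1 @ 0 # q))" by simp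
  have k: "(replicate k (1::nat) @ [0]) @ p = replicate k 1 @ (0 # p)" by simp
  have "(0 # p, 1 # (replicate d 1 @ 0 # q)) \<in> lexord {(a, b). a < (b::nat)}" by simp
  then show ?thesis unfolding j k lexord_same_pref_iff by blast
qed

lemma summarizes_one_step:
  assumes os: "one_step T \<psi>" and r: "red_seq T (t0, W, a)"
    and d: "denotes T \<psi> (src1 T \<psi>) {[]} (t0, W, a)"
  shows "summarizes T (enat (length (rpos \<psi>))) True (Some (tgt1 T \<psi>)) (t0, W, a)"
proof -
  have wo: "Well_order W" using r by simp
  obtain f where iso: "order_iso (lexrel {[]}) W f" and ds: "denotes_step T (subt \<psi> []) (a (f []))"
    using d by auto
  have F: "Field W = {f []}" using order_iso_lexrel_Field[OF iso] by simp
  obtain t p \<mu> \<sigma> where a: "a (f []) = (t, p, \<mu>, \<sigma>)" by (cases "a (f [])")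
  have "subt \<psi> [] = \<psi>" by (simp add: subt_def)
  then have tgt: "tgt1 T \<psi> = st_tgt T (t, p, \<mu>, \<sigma>)" and "\<psi> p = Some (Rs \<mu>)" using ds a by auto
  then have "rpos \<psi> = p"
    using os unfolding rpos_def one_step_def by (blast intro: the1_equality)
  moreover have "has_max W" using F Well_order_refl[OF wo] unfolding has_max_def by auto
  moreover have "seq_tgt T (t0, W, a) = st_tgt T (a (f []))"
    using F Well_order_refl[OF wo] by (intro seq_tgt_max[OF wo]) auto
  ultimately show ?thesis unfolding summarizes_def using F a tgt by simp
qed

lemma summarizes_comp:
  assumes S: "S1 \<noteq> {}" "S2 \<noteq> {}"
    and IH1: "\<And>t0 (W::'i rel) a. red_seq T (t0, W, a) \<Longrightarrow> denotes T \<psi>1 s1 S1 (t0, W, a) \<Longrightarrow>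
       summarizes T m1 c1 (Some t1) (t0, W, a)"
    and IH2: "\<And>t0 (W::'i rel) a. red_seq T (t0, W, a) \<Longrightarrow> denotes T \<psi>2 t1 S2 (t0, W, a) \<Longrightarrow>
       summarizes T m2 c2 t2 (t0, W, a)"
    and r: "red_seq T (t0, W :: 'i rel, a)"
    and d: "denotes T (comp \<psi>1 \<psi>2) s1 ((\<lambda>p. 0 # p) ` S1 \<union> (\<lambda>p. 1 # p) ` S2) (t0, W, a)"
  shows "summarizes T (min m1 m2) c2 t2 (t0, W, a)"
proof -
  let ?S = "(\<lambda>p. 0 # p) ` S1 \<union> (\<lambda>p. 1 # p) ` S2"
  have wo: "Well_order W" using r by simp
  obtain f where iso: "order_iso (lexrel ?S) W f"
    and ds: "\<forall>p\<in>?S. denotes_step T (subt (comp \<psi>1 \<psi>2) p) (a (f p))" and "s1 = t0"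
    using d by auto
  define D1 where "D1 = f ` (\<lambda>p. [0] @ p) ` S1"
  define D2 where "D2 = f ` (\<lambda>p. [1] @ p) ` S2"
  have "inj_on f ?S" by (rule order_iso_lexrel_inj_on[OF iso])
  then have "D1 \<inter> D2 = {}" unfolding D1_def D2_def inj_on_def by fastforce
  moreover have "i \<in> D1 \<Longrightarrow> j \<in> D2 \<Longrightarrow> (i, j) \<in> W" for i j
    using order_iso_lexrel_lt[OF iso] unfolding D1_def D2_def lt_def by fastforce
  ultimately have cut: "is_cut W D1 D2"
    using S order_iso_lexrel_Field[OF iso] unfolding is_cut_def D1_def D2_def by auto
  have "denotes T \<psi>1 t0 S1 (t0, Restr W D1, a)"
    unfolding D1_def by (rule denotes_Restr_subterm[OF iso ds wo _ subt_comp(1)]) auto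
  then have "summarizes T m1 c1 (Some t1) (t0, Restr W D1, a)"
    using IH1[OF red_seq_cut(1)[OF r cut]] \<open>s1 = t0\<close> by simp
  then have m1: "m1 = seq_mind (t0, Restr W D1, a)" and t1: "t1 = seq_tgt T (t0, Restr W D1, a)"
    using red_seq_cut(2)[OF r cut] unfolding summarizes_def by auto
  have "denotes T \<psi>2 t1 S2 (t1, Restr W D2, a)"
    unfolding D2_def by (rule denotes_Restr_subterm[OF iso ds wo _ subt_comp(2)]) auto
  then have "summarizes T m2 c2 t2 (t1, Restr W D2, a)"
    by (rule IH2[OF red_seq_cut(3)[OF r cut, folded t1]])
  then show ?thesis
    unfolding summarizes_def m1 seq_mind_cut[OF wo cut, of t0 a t1]
      seq_conv_seq_tgt_cut[OF wo cut, of T t0 a t1] by blast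
qed

lemma summarizes_prod:
  assumes S: "\<And>k. S k \<noteq> {}"
    and IH: "\<And>k t0 (W::'i rel) a. red_seq T (t0, W, a) \<Longrightarrow> denotes T (\<psi>s k) (s k) (S k) (t0, W, a) \<Longrightarrow>
       summarizes T (m k) True (Some (s (Suc k))) (t0, W, a)"
    and r: "red_seq T (t0, W :: 'i rel, a)"
    and d: "denotes T (prod \<psi>s) (s 0) (\<Union>k. (\<lambda>p. replicate k 1 @ 0 # p) ` S k) (t0, W, a)"
  shows "summarizes T (INF k. m k) (\<forall>n::nat. \<exists>N. \<forall>j\<ge>N. enat n < m j) (seq_lim T s) (t0, W, a)"
proof -
  let ?S = "\<Union>k. (\<lambda>p. replicate k 1 @ 0 # p) ` S k"
  have wo: "Well_order W" using r by simp
  obtain f where iso: "order_iso (lexrel ?S) W f"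
    and ds: "\<forall>p\<in>?S. denotes_step T (subt (prod \<psi>s) p) (a (f p))" and s0: "s 0 = t0"
    using d by auto
  define D where "D k = f ` (\<lambda>p. (replicate k 1 @ [0]) @ p) ` S k" for k
  have "omega_blocks W D"
    unfolding omega_blocks_def
  proof (intro conjI allI impI)
    show "Field W = (\<Union>k. D k)" unfolding order_iso_lexrel_Field[OF iso] D_def by auto
    show "D k \<noteq> {}" for k using S unfolding D_def by auto
    show "lt W i j" if "k < l" "i \<in> D k" "j \<in> D l" for k l i j
      using that order_iso_lexrel_lt[OF iso _ _ lexord_replicate_blocks] unfolding D_def by fastforce
  qed
  note D = this
  have den: "denotes T (\<psi>s k) (s k) (S k) (s k, Restr W (D k), a)" for k
    unfolding D_def by (rule denotes_Restr_subterm[OF iso ds wo _ subt_prod]) auto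
  have tgt: "seq_tgt T (s k, Restr W (D k), a) = s (Suc k)" if "red_seq T (s k, Restr W (D k), a)" for k
    using IH[OF that den] unfolding summarizes_def by simp
  have blocks: "red_seq T (s k, Restr W (D k), a) \<and> seq_conv T (s k, Restr W (D k), a) \<and>
      seq_tgt T (s k, Restr W (D k), a) = s (Suc k)" for k
    using red_seq_omega_blocks[where s = s, OF r[folded s0] D tgt] .
  have m: "m k = seq_mind (s k, Restr W (D k), a)" for k
    using IH[OF _ den] blocks unfolding summarizes_def by blast
  note conv = seq_conv_omega_blocks[where s = s, OF r[folded s0] D blocks]
  show ?thesis
    unfolding summarizes_def m s0[symmetric] seq_mind_omega_blocks[where s = s, OF wo D] conv(1)[symmetric]
    using conv(2) by blast
qed

lemma summarizes_stepwise:
  assumes "stepwise T \<psi> s t m c S" and "red_seq T (t0, W, a)" and "denotes T \<psi> s S (t0, W, a)"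
  shows "summarizes T m c t (t0, W, a)"
  using assms
proof (induction arbitrary: t0 W a rule: stepwise.induct)
  case (one \<psi>)
  show ?case by (rule summarizes_one_step[OF one.hyps one.prems])
next
  case (cmp \<psi>1 s1 t1 m1 c1 S1 \<psi>2 t2 m2 c2 S2)
  show ?case
    by (rule summarizes_comp[OF stepwise_components_nonempty[OF cmp.hyps(1)]
          stepwise_components_nonempty[OF cmp.hyps(2)] cmp.IH cmp.prems])
next
  case (prd \<psi>s s m S)
  show ?case by (rule summarizes_prod[OF stepwise_components_nonempty[OF prd.hyps] prd.IH prd.prems])
qed

theorem mainTheorem4:
  fixes T :: "('f,'v,'r) trs" and A :: "('f,'v,'r,'i) rseq"
  assumes "trs_ok T"
    and "red_seq T A"
    and "stepwise_or_normal T \<psi> s t m c S"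
    and "denotes T \<psi> s S A"
  shows "m = seq_mind A \<and> (c \<longleftrightarrow> seq_conv T A) \<and> (c \<longrightarrow> t = Some (seq_tgt T A))"
proof -
  obtain t0 W a where A: "A = (t0, W, a)" by (cases A)
  consider "stepwise T \<psi> s t m c S" | "s = \<psi>" "t = Some \<psi>" "m = \<infinity>" "c" "S = {}"
    using assms(3) unfolding stepwise_or_normal_def by blast
  then show ?thesis
  proof cases
    case 1
    then show ?thesis using summarizes_stepwise assms(2,4) unfolding A summarizes_def by blast
  next
    case 2
    then have "Field W = {}" and "s = t0"
      using assms(4) order_iso_lexrel_Field unfolding A by auto
    then show ?thesis using 2 unfolding A by simp
  qed
qed

end
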